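(* Let $f:\mathbf{R}^d\times A\to\mathbf{R}^d$ be odd in the action, $f(x,-a)=-f(x,a)$, bounded with $\|f(x,a)\|\le M$ for all states $x$ and actions $a\in A$, and Lipschitz continuous in the state, $\|f(x,a)-f(x',a)\|\le L\|x-x'\|$. Let $\nu>0$, $T\in\mathbf{N}$, and let $x_T(0),\dots,x_T(2T)$ be generated by Euler's method $x_T(k+1)=x_T(k)+\nu f(x_T(k),a_T(k))$ (equivalently $x_T(k)=x_T(0)+\nu\sum_{i=0}^{k-1}f(x_T(i),a_T(i))$) with actions $a_T(0),\dots,a_T(2T-1)\in A$ satisfying $a_T(T+k)=-a_T(T-1-k)$ for $k=0,\dots,T-1$. Then $$\|x_T(0)-x_T(2T)\|\le \nu M\left[e^{TL\nu}-1\right].$$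
   Context: This models discretized teleoperation with a learned action map $f$: $x_T(k)\in\mathbf{R}^d$ is the robot state at step $k$, $a_T(k)$ the user's action at step $k$ (from a bounded action set $A$ closed under negation), and $\nu>0$ the update rate. The second half of the action sequence is the first half negated in reverse order. *)

theory Defs
  imports "HOL-Analysis.Analysis"
begin

end

theory Submission
  imports Defs
begin

(* Because the second half of the action sequence replays the first half backwards with negated
   actions, each step after time T approximately undoes the mirror-image step before T.  The gap
   d j = norm (x (T + j) - x (T - j)) therefore starts at 0 and only grows through the Lipschitz
   mismatch of f at the two points, giving d (j + 1) \<le> (1 + \<nu> L) d j + \<nu> L \<nu> M;
   a discrete Gronwall argument and (1 + \<nu> L)^T \<le> exp (T L \<nu>) finish the proof. *)

lemma one_plus_power_le_exp:
  fixes h :: real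
  assumes "-1 \<le> h"
  shows "(1 + h) ^ n \<le> exp (real n * h)"
proof -
  have "(1 + h) ^ n \<le> exp h ^ n"
    using assms by (intro power_mono) (simp_all add: exp_ge_add_one_self)
  also have "\<dots> = exp (real n * h)"
    by (simp add: exp_of_nat_mult)
  finally show ?thesis .
qed

lemma discrete_gronwall:
  fixes d :: "nat \<Rightarrow> real"
  assumes "0 \<le> h" and "d 0 \<le> 0"
    and step: "\<And>j. j < n \<Longrightarrow> d (Suc j) \<le> (1 + h) * d j + h * b"
    and "j \<le> n"
  shows "d j \<le> b * ((1 + h) ^ j - 1)"
  using \<open>j \<le> n\<close>
proof (induction j)
  case 0
  then show ?case using \<open>d 0 \<le> 0\<close> by simp
next
  case (Suc j)
  have "d (Suc j) \<le> (1 + h) * d j + h * b"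
    using step Suc.prems by simp
  also have "\<dots> \<le> (1 + h) * (b * ((1 + h) ^ j - 1)) + h * b"
    using Suc \<open>0 \<le> h\<close> by (simp add: mult_left_mono)
  also have "\<dots> = b * ((1 + h) ^ Suc j - 1)"
    by (simp add: algebra_simps)
  finally show ?case .
qed

lemma euler_step_reversal_dist:
  fixes g :: "'a::real_normed_vector \<Rightarrow> 'a"
  assumes "0 \<le> \<nu>" and "0 \<le> L"
    and g_lip: "norm (g y - g z) \<le> L * norm (y - z)"
    and g_bdd: "norm (g y) \<le> M"
  shows "norm ((z - \<nu> *\<^sub>R g z) - y)
    \<le> (1 + \<nu> * L) * norm (z - (y + \<nu> *\<^sub>R g y)) + \<nu> * L * (\<nu> * M)"
proof -
  define D where "D = norm (z - (y + \<nu> *\<^sub>R g y))"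
  have step_bdd: "norm (\<nu> *\<^sub>R g y) \<le> \<nu> * M"
    using g_bdd \<open>0 \<le> \<nu>\<close> by (simp add: mult_left_mono)
  have "y - z = - (z - (y + \<nu> *\<^sub>R g y)) - \<nu> *\<^sub>R g y"
    by (simp add: algebra_simps)
  then have "norm (y - z) \<le> D + \<nu> * M"
    unfolding D_def using norm_triangle_ineq4[of "- (z - (y + \<nu> *\<^sub>R g y))" "\<nu> *\<^sub>R g y"] step_bdd
    by (simp only: norm_minus_cancel)
  then have lip_step: "norm (\<nu> *\<^sub>R (g y - g z)) \<le> \<nu> * (L * (D + \<nu> * M))"
    using g_lip assms(1,2) by (simp add: mult_left_mono order_trans)
  have "(z - \<nu> *\<^sub>R g z) - y = (z - (y + \<nu> *\<^sub>R g y)) + \<nu> *\<^sub>R (g y - g z)"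
    by (simp add: algebra_simps)
  then have "norm ((z - \<nu> *\<^sub>R g z) - y) \<le> D + norm (\<nu> *\<^sub>R (g y - g z))"
    unfolding D_def by (simp only: norm_triangle_ineq)
  also have "\<dots> \<le> D + \<nu> * (L * (D + \<nu> * M))"
    using lip_step by simp
  also have "\<dots> = (1 + \<nu> * L) * D + \<nu> * L * (\<nu> * M)"
    by (simp add: algebra_simps)
  finally show ?thesis
    unfolding D_def .
qed

lemma lipschitz_const_nonneg:
  fixes g :: "'a::real_normed_vector \<Rightarrow> 'b::real_normed_vector"
  assumes "norm (g y - g z) \<le> L * norm (y - z)" and "y \<noteq> z"
  shows "0 \<le> L"
  using order_trans[OF norm_ge_zero assms(1)] assms(2) by (simp add: zero_le_mult_iff)

lemma mirrored_euler_gap_step: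
  fixes f :: "'a::real_normed_vector \<Rightarrow> 'b::real_normed_vector \<Rightarrow> 'a"
  assumes "0 \<le> \<nu>" and "0 \<le> L" and "j < T"
    and euler: "\<And>k. k < 2 * T \<Longrightarrow> x (Suc k) = x k + \<nu> *\<^sub>R f (x k) (a k)"
    and a_before: "a (T - Suc j) = u" and a_after: "a (T + j) = - u"
    and f_odd: "\<And>y. f y (- u) = - f y u"
    and f_lip: "\<And>y y'. norm (f y u - f y' u) \<le> L * norm (y - y')"
    and f_bdd: "\<And>y. norm (f y u) \<le> M"
  shows "norm (x (T + Suc j) - x (T - Suc j))
    \<le> (1 + \<nu> * L) * norm (x (T + j) - x (T - j)) + \<nu> * L * (\<nu> * M)"
proof -
  have "x (T + Suc j) = x (T + j) - \<nu> *\<^sub>R f (x (T + j)) u"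
    using euler[of "T + j"] \<open>j < T\<close> a_after f_odd by simp
  moreover have "x (T - j) = x (T - Suc j) + \<nu> *\<^sub>R f (x (T - Suc j)) u"
    using euler[of "T - Suc j"] \<open>j < T\<close> a_before by (simp add: Suc_diff_Suc)
  ultimately show ?thesis
    using euler_step_reversal_dist[OF assms(1,2), of "\<lambda>y. f y u", OF f_lip f_bdd] by simp
qed

theorem theorem2:
  fixes f :: "real ^ 'd \<Rightarrow> 'b::real_normed_vector \<Rightarrow> real ^ 'd"
    and A :: "'b set" and M L \<nu> :: real and T :: nat
    and x :: "nat \<Rightarrow> real ^ 'd" and a :: "nat \<Rightarrow> 'b"
  assumes A_neg: "\<And>u. u \<in> A \<Longrightarrow> - u \<in> A"
    and A_bdd: "bounded A"
    and f_odd: "\<And>y u. u \<in> A \<Longrightarrow> f y (- u) = - f y u"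
    and f_bdd: "\<And>y u. u \<in> A \<Longrightarrow> norm (f y u) \<le> M"
    and f_lip: "\<And>y y' u. u \<in> A \<Longrightarrow> norm (f y u - f y' u) \<le> L * norm (y - y')"
    and nu_pos: "\<nu> > 0"
    and euler: "\<And>k. k < 2 * T \<Longrightarrow> x (Suc k) = x k + \<nu> *\<^sub>R f (x k) (a k)"
    and a_in: "\<And>k. k < 2 * T \<Longrightarrow> a k \<in> A"
    and a_sym: "\<And>k. k < T \<Longrightarrow> a (T + k) = - a (T - 1 - k)"
  shows "norm (x 0 - x (2 * T)) \<le> \<nu> * M * (exp (real T * L * \<nu>) - 1)"
proof (cases "T = 0")
  case False
  then have a0: "a 0 \<in> A" using a_in by simp
  have M_nonneg: "0 \<le> M" using f_bdd[OF a0, of 0] norm_ge_zero order_trans by blast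
  have L_nonneg: "0 \<le> L" using lipschitz_const_nonneg[OF f_lip[OF a0, of 1 0]] by simp
  have h_nonneg: "0 \<le> \<nu> * L" using nu_pos L_nonneg by simp
  define d where "d j = norm (x (T + j) - x (T - j))" for j
  have "d (Suc j) \<le> (1 + \<nu> * L) * d j + \<nu> * L * (\<nu> * M)" if "j < T" for j
  proof -
    have u: "a (T - Suc j) \<in> A" using a_in that by simp
    have "a (T + j) = - a (T - Suc j)" using a_sym[OF that] by simp
    from mirrored_euler_gap_step[where f = f and a = a and x = x,
        OF _ L_nonneg that euler refl this f_odd[OF u] f_lip[OF u] f_bdd[OF u]]
    show ?thesis unfolding d_def using nu_pos by simp
  qed
  then have "d T \<le> \<nu> * M * ((1 + \<nu> * L) ^ T - 1)"
    using h_nonneg by (intro discrete_gronwall[where n = T]) (auto simp: d_def)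
  also have "\<dots> \<le> \<nu> * M * (exp (real T * L * \<nu>) - 1)"
    using one_plus_power_le_exp[of "\<nu> * L" T] h_nonneg nu_pos M_nonneg
    by (intro mult_left_mono) (auto simp: mult_ac)
  finally show ?thesis
    unfolding d_def by (simp add: norm_minus_commute flip: mult_2)
qed simp

end
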